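(* Consider the dynamic pricing data structure described in the context, and let $d_{\max}$ be the largest degree of any vertex of the current graph $W$. Then the running time of $\textsc{InsEdge}$ is in $\mathcal{O}(1)$, of $\textsc{DelEdge}$ is in $\mathcal{O}(d_{\max})$, of $\textsc{DecWeight}$ is in $\mathcal{O}(d_{\max}^2)$, and of $\textsc{IncWeight}$ is in $\mathcal{O}(d_{\max})$.
   Context: Let $W$ be a finite simple undirected graph with vertex weights $w:V(W)\to\mathbb{R}_{\ge0}$, stored with adjacency lists; each edge $e$ carries a price $p(e)$ and a set $C\subseteq V(W)$ is maintained. For a vertex $v$, $\delta(v)$ is the set of edges incident to $v$ and $s(v)=\sum_{e\in\delta(v)}p(e)$ (the value $s(v)$ is stored for each vertex). $v$ is tight if $s(v)=w(v)$. Procedures: $\textsc{Update}(F)$: for each $e=\{u,v\}\in F$ in turn, if $u$ or $v$ is tight skip $e$; otherwise increase $p(e)$ until $u$ or $v$ is tight and add the newly tight vertices to $C$. $\textsc{InsEdge}(e_n=\{u,v\})$: add $e_n$ to $E(W)$ with $p(e_n)=0$; call $\textsc{Update}(\{e_n\})$. $\textsc{DelEdge}(e_d=\{u,v\})$: remove $e_d$ from $E(W)$ and update $s(u),s(v)$; set $C\gets C\setminus\{u,v\}$; let $F=\{\{x,y\}\in E(W)\mid y\in\{u,v\},\ x\text{ not tight}\}$; call $\textsc{Update}(F)$. $\textsc{DecWeight}(v,w_n)$: set $w(v)\gets w_n$; $C\gets C\setminus\{v\}$; $F\gets\emptyset$; for each $e=\{v,x\}\in\delta(v)$: set $p(e)\gets0$,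 and if $x$ is not tight then $C\gets C\setminus\{x\}$ and $F\gets F\cup\{\{x,y\}\in E(W)\mid y\text{ not tight}\}\cup\{e\}$; finally call $\textsc{Update}(F)$. $\textsc{IncWeight}(v,w_n)$: set $w(v)\gets w_n$; if $v\in C$, set $C\gets C\setminus\{v\}$, let $F=\{\{x,v\}\in E(W)\mid x\text{ not tight}\}$ and call $\textsc{Update}(F)$. *)

theory Defs
  imports Complex_Main
begin

text \<open>Vertices of type 'a; V is the (finite) vertex
set; adjacency lists adj; vertex weights wt; edge prices pr (stored symmetrically,
pr x y = pr y x = p({x,y})); stored sums sv (= s(v)); the maintained set Cv (= C).\<close>

record 'a pstate =
  V   :: "'a set"
  adj :: "'a \<Rightarrow> 'a list"
  wt  :: "'a \<Rightarrow> real"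
  pr  :: "'a \<Rightarrow> 'a \<Rightarrow> real"
  sv  :: "'a \<Rightarrow> real"
  Cv  :: "'a set"

definition tight :: "'a pstate \<Rightarrow> 'a \<Rightarrow> bool" where
  "tight st x \<longleftrightarrow> sv st x = wt st x"

definition set_price :: "'a pstate \<Rightarrow> 'a \<Rightarrow> 'a \<Rightarrow> real \<Rightarrow> 'a \<Rightarrow> 'a \<Rightarrow> real" where
  "set_price st x y q = (\<lambda>a b. if {a, b} = {x, y} then q else pr st a b)"

definition valid :: "'a pstate \<Rightarrow> bool" where
  "valid st \<longleftrightarrow>
     finite (V st) \<and>
     (\<forall>x. set (adj st x) \<subseteq> V st) \<and>
     (\<forall>x. x \<notin> V st \<longrightarrow> adj st x = []) \<and>
     (\<forall>x. distinct (adj st x)) \<and>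
     (\<forall>x. x \<notin> set (adj st x)) \<and>
     (\<forall>x y. y \<in> set (adj st x) \<longleftrightarrow> x \<in> set (adj st y)) \<and>
     (\<forall>x. 0 \<le> wt st x) \<and>
     (\<forall>x y. pr st x y = pr st y x \<and> 0 \<le> pr st x y) \<and>
     (\<forall>x. sv st x = sum_list (map (pr st x) (adj st x)))"

definition deg :: "'a pstate \<Rightarrow> 'a \<Rightarrow> nat" where
  "deg st x = card (set (adj st x))"

definition dmax :: "'a pstate \<Rightarrow> nat" where
  "dmax st = Max (insert 0 (deg st ` V st))"

definition raise_edge :: "'a pstate \<Rightarrow> 'a \<times> 'a \<Rightarrow> 'a pstate \<times> nat" where
  "raise_edge st e = (case e of (x, y) \<Rightarrow>
     if tight st x \<or> tight st y then (st, 1)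
     else let d = min (wt st x - sv st x) (wt st y - sv st y);
              st1 = st\<lparr>pr := set_price st x y (pr st x y + d),
                       sv := (\<lambda>z. if z = x \<or> z = y then sv st z + d else sv st z)\<rparr>
          in (st1\<lparr>Cv := Cv st1 \<union> {z \<in> {x, y}. tight st1 z}\<rparr>, 1))"

definition update :: "'a pstate \<Rightarrow> ('a \<times> 'a) list \<Rightarrow> 'a pstate \<times> nat" where
  "update st F = foldl (\<lambda>(s, c) e. let (s', c') = raise_edge s e in (s', c + c')) (st, 1) F"

definition ins_edge :: "'a pstate \<Rightarrow> 'a \<Rightarrow> 'a \<Rightarrow> 'a pstate \<times> nat" where
  "ins_edge st u v =
     (let st1 = st\<lparr>adj := (adj st)(u := v # adj st u, v := u # adj st v),
                   pr := set_price st u v 0\<rparr>;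
          (st2, c) = update st1 [(u, v)]
      in (st2, 1 + c))"

text \<open>Removing v from the list adj u costs a scan of adj u; computing F costs a scan
of the (new) adjacency lists of u and v.\<close>

definition del_edge :: "'a pstate \<Rightarrow> 'a \<Rightarrow> 'a \<Rightarrow> 'a pstate \<times> nat" where
  "del_edge st u v =
     (let st1 = st\<lparr>adj := (adj st)(u := removeAll v (adj st u), v := removeAll u (adj st v)),
                   sv := (sv st)(u := sv st u - pr st u v, v := sv st v - pr st u v),
                   pr := set_price st u v 0,
                   Cv := Cv st - {u, v}\<rparr>;
          c1 = 1 + length (adj st u) + length (adj st v);
          F = concat (map (\<lambda>y. map (\<lambda>x. (x, y)) (filter (\<lambda>x. \<not> tight st1 x) (adj st1 y))) [u, v]);
          cF = length (adj st1 u) + length (adj st1 v);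
          (st2, c2) = update st1 F
      in (st2, c1 + cF + c2))"

text \<open>One iteration of the loop of DecWeight over e = {v,x}: set p(e) to 0 (adjusting
the stored sums), and if x is not tight remove x from C and add the edges {x,y} with
y not tight, and e, to F; this scans adj x.\<close>

definition dec_step :: "'a \<Rightarrow> 'a pstate \<times> ('a \<times> 'a) list \<times> nat \<Rightarrow> 'a \<Rightarrow> 'a pstate \<times> ('a \<times> 'a) list \<times> nat" where
  "dec_step v acc x = (case acc of (st, F, c) \<Rightarrow>
     let old = pr st v x;
         st1 = st\<lparr>pr := set_price st v x 0,
                  sv := (sv st)(v := sv st v - old, x := sv st x - old)\<rparr>
     in if \<not> tight st1 x
        then (st1\<lparr>Cv := Cv st1 - {x}\<rparr>,
              F @ map (\<lambda>y. (x, y)) (filter (\<lambda>y. \<not> tight st1 y) (adj st1 x)) @ [(v, x)],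
              c + 1 + length (adj st1 x))
        else (st1, F, c + 1))"

definition dec_weight :: "'a pstate \<Rightarrow> 'a \<Rightarrow> real \<Rightarrow> 'a pstate \<times> nat" where
  "dec_weight st v wn =
     (let st0 = st\<lparr>wt := (wt st)(v := wn), Cv := Cv st - {v}\<rparr>;
          (st1, F, c1) = foldl (dec_step v) (st0, [], 0) (adj st0 v);
          (st2, c2) = update st1 F
      in (st2, 1 + c1 + c2))"

definition inc_weight :: "'a pstate \<Rightarrow> 'a \<Rightarrow> real \<Rightarrow> 'a pstate \<times> nat" where
  "inc_weight st v wn =
     (let st0 = st\<lparr>wt := (wt st)(v := wn)\<rparr>
      in if v \<in> Cv st0
         then let st1 = st0\<lparr>Cv := Cv st0 - {v}\<rparr>;
                  F = map (\<lambda>x. (x, v)) (filter (\<lambda>x. \<not> tight st1 x) (adj st1 v));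
                  (st2, c) = update st1 F
              in (st2, 1 + length (adj st1 v) + c)
         else (st0, 1))"

end

theory Submission
  imports Defs
begin

text \<open>Every call of Update costs one step per edge of F (plus one), whatever F contains.
Hence InsEdge has constant cost, while DelEdge and IncWeight only scan adjacency lists of
one or two vertices, and DecWeight scans the adjacency list of every neighbour of v; each
adjacency list has length at most d_max. None of these bounds uses the preconditions of the
operations (edge present/absent, direction of the weight change).\<close>

lemma raise_edge_cost [simp]: "snd (raise_edge st e) = 1"
  unfolding raise_edge_def by (auto simp: Let_def split: prod.splits)

lemma foldl_raise_edge_cost:
  "snd (foldl (\<lambda>(s, c) e. let (s', c') = raise_edge s e in (s', c + c')) (st, k) F)
     = k + length F"
proof (induction F arbitrary: st k)
  case Nil
  then show ?case by simp
next
  case (Cons e F)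
  obtain s' c' where "raise_edge st e = (s', c')" by fastforce
  moreover from this have "c' = 1" using raise_edge_cost[of st e] by simp
  ultimately show ?case using Cons.IH[of s' "k + 1"] by simp
qed

lemma update_cost: "snd (update st F) = 1 + length F"
  unfolding update_def by (simp only: foldl_raise_edge_cost)

lemma length_adj_le_dmax:
  assumes "valid st"
  shows "length (adj st x) \<le> dmax st"
proof (cases "x \<in> V st")
  case True
  have "length (adj st x) = deg st x"
    using assms by (simp add: valid_def deg_def distinct_card)
  also have "\<dots> \<le> dmax st"
    unfolding dmax_def using assms True by (intro Max_ge) (auto simp: valid_def)
  finally show ?thesis .
next
  case False
  then show ?thesis using assms by (simp add: valid_def)
qed

lemma ins_edge_cost: "snd (ins_edge st u v) = 3"
proof -
  let ?st1 = "st\<lparr>adj := (adj st)(u := v # adj st u, v := u # adj st v),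
                  pr := set_price st u v 0\<rparr>"
  obtain st2 c where "update ?st1 [(u, v)] = (st2, c)" by fastforce
  moreover from this have "c = 2" using update_cost[of ?st1 "[(u, v)]"] by simp
  ultimately show ?thesis by (simp add: ins_edge_def Let_def)
qed

lemma del_edge_cost_le:
  "snd (del_edge st u v) \<le> 2 + 3 * length (adj st u) + 3 * length (adj st v)"
proof -
  define st1 where "st1 = st\<lparr>adj := (adj st)(u := removeAll v (adj st u), v := removeAll u (adj st v)),
                   sv := (sv st)(u := sv st u - pr st u v, v := sv st v - pr st u v),
                   pr := set_price st u v 0,
                   Cv := Cv st - {u, v}\<rparr>"
  define F where
    "F = concat (map (\<lambda>y. map (\<lambda>x. (x, y)) (filter (\<lambda>x. \<not> tight st1 x) (adj st1 y))) [u, v])"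
  obtain st2 c where U: "update st1 F = (st2, c)" by fastforce
  have cost: "snd (del_edge st u v)
      = 1 + length (adj st u) + length (adj st v) + (length (adj st1 u) + length (adj st1 v)) + c"
    using U unfolding del_edge_def st1_def[symmetric] F_def by (simp add: Let_def)
  have c: "c = 1 + length F" using update_cost[of st1 F] U by simp
  have F: "length F \<le> length (adj st1 u) + length (adj st1 v)"
    unfolding F_def by (simp add: add_mono length_filter_le)
  have "length (adj st1 u) \<le> length (adj st u)" "length (adj st1 v) \<le> length (adj st v)"
    unfolding st1_def by (auto intro: le_trans[OF length_removeAll_less_eq])
  with cost c F show ?thesis by linarith
qed

text \<open>Each loop iteration of DecWeight costs one step, plus a scan of adj x that puts at most
length (adj x) + 1 edges into F, each of which later costs one step in Update.\<close>

lemma foldl_dec_step_cost: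
  assumes "foldl (dec_step v) (st, F, c) xs = (st', F', c')"
  shows "adj st' = adj st \<and>
    length F' + c' \<le> length F + c + (\<Sum>x\<leftarrow>xs. 2 + 2 * length (adj st x))"
  using assms
proof (induction xs arbitrary: st F c)
  case Nil
  then show ?case by simp
next
  case (Cons x xs)
  obtain st1 F1 c1 where step: "dec_step v (st, F, c) x = (st1, F1, c1)"
    by (cases "dec_step v (st, F, c) x")
  have "adj st1 = adj st \<and> length F1 + c1 \<le> length F + c + 2 + 2 * length (adj st x)"
    using step unfolding dec_step_def
    by (auto simp: Let_def split: if_splits intro: le_trans[OF length_filter_le])
  moreover have "foldl (dec_step v) (st1, F1, c1) xs = (st', F', c')"
    using Cons.prems step by simp
  ultimately show ?case using Cons.IH by fastforce
qed

lemma dec_weight_cost_le: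
  "snd (dec_weight st v wn) \<le> 2 + (\<Sum>x\<leftarrow>adj st v. 2 + 2 * length (adj st x))"
proof -
  define st0 where "st0 = st\<lparr>wt := (wt st)(v := wn), Cv := Cv st - {v}\<rparr>"
  obtain st1 F c1 where loop: "foldl (dec_step v) (st0, [], 0) (adj st0 v) = (st1, F, c1)"
    by (metis prod_cases3)
  obtain st2 c2 where U: "update st1 F = (st2, c2)" by fastforce
  have "snd (dec_weight st v wn) = 1 + c1 + c2"
    unfolding dec_weight_def st0_def[symmetric] using loop U by (simp add: Let_def)
  moreover have "c2 = 1 + length F" using update_cost[of st1 F] U by simp
  moreover have "adj st0 = adj st" unfolding st0_def by simp
  ultimately show ?thesis using foldl_dec_step_cost[OF loop] by simp
qed

lemma inc_weight_cost_le: "snd (inc_weight st v wn) \<le> 2 + 2 * length (adj st v)"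
proof (cases "v \<in> Cv st")
  case False
  then show ?thesis by (simp add: inc_weight_def Let_def)
next
  case True
  define st1 where "st1 = st\<lparr>wt := (wt st)(v := wn), Cv := Cv st - {v}\<rparr>"
  define F where "F = map (\<lambda>x. (x, v)) (filter (\<lambda>x. \<not> tight st1 x) (adj st1 v))"
  obtain st2 c where U: "update st1 F = (st2, c)" by fastforce
  have "snd (inc_weight st v wn) = 1 + length (adj st v) + c"
    using True U unfolding inc_weight_def
    by (simp add: Let_def st1_def[symmetric] F_def[symmetric]) (simp add: st1_def)
  moreover have "c = 1 + length F" using update_cost[of st1 F] U by simp
  moreover have "length F \<le> length (adj st v)"
    unfolding F_def st1_def by (simp add: length_filter_le)
  ultimately show ?thesis by linarith
qed

lemma dec_weight_cost_le_dmax: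
  assumes "valid st"
  shows "snd (dec_weight st v wn) \<le> 2 * (dmax st + 1) ^ 2"
proof -
  let ?d = "dmax st"
  have "(\<Sum>x\<leftarrow>adj st v. 2 + 2 * length (adj st x)) \<le> (\<Sum>x\<leftarrow>adj st v. 2 + 2 * ?d)"
    using length_adj_le_dmax[OF assms] by (intro sum_list_mono) simp
  also have "\<dots> = length (adj st v) * (2 + 2 * ?d)" by (simp add: sum_list_triv)
  also have "\<dots> \<le> ?d * (2 + 2 * ?d)"
    using length_adj_le_dmax[OF assms] by (intro mult_right_mono) simp_all
  finally have "snd (dec_weight st v wn) \<le> 2 + ?d * (2 + 2 * ?d)"
    using dec_weight_cost_le[of st v wn] by linarith
  also have "\<dots> \<le> 2 * (?d + 1) ^ 2" by (simp add: power2_eq_square algebra_simps)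
  finally show ?thesis .
qed

theorem theorem2:
  "\<exists>c::nat. \<forall>(st :: 'a pstate) u v wn. valid st \<longrightarrow>
     ((u \<in> V st \<and> v \<in> V st \<and> u \<noteq> v \<and> v \<notin> set (adj st u)
         \<longrightarrow> snd (ins_edge st u v) \<le> c) \<and>
      (v \<in> set (adj st u)
         \<longrightarrow> snd (del_edge st u v) \<le> c * (dmax st + 1)) \<and>
      (v \<in> V st \<and> 0 \<le> wn \<and> wn \<le> wt st v
         \<longrightarrow> snd (dec_weight st v wn) \<le> c * (dmax st + 1) ^ 2) \<and>
      (v \<in> V st \<and> wt st v \<le> wn
         \<longrightarrow> snd (inc_weight st v wn) \<le> c * (dmax st + 1)))"
proof (intro exI[of _ 6] allI impI conjI)
  fix st :: "'a pstate" and u v :: 'a and wn :: real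
  assume valid: "valid st"
  note adj_le = length_adj_le_dmax[OF valid]
  show "snd (ins_edge st u v) \<le> 6" by (simp add: ins_edge_cost)
  show "snd (del_edge st u v) \<le> 6 * (dmax st + 1)"
    using del_edge_cost_le[of st u v] adj_le[of u] adj_le[of v] by (simp add: algebra_simps)
  show "snd (dec_weight st v wn) \<le> 6 * (dmax st + 1) ^ 2"
    using dec_weight_cost_le_dmax[OF valid, of v wn] by linarith
  show "snd (inc_weight st v wn) \<le> 6 * (dmax st + 1)"
    using inc_weight_cost_le[of st v wn] adj_le[of v] by (simp add: algebra_simps)
qed

end
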